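(* Let $n\ge2$, $k\ge1$, and let $\partial_k$ denote the distance in $H_{n,k}$. Let $\mathbf z^{01}=x_1\ldots x_k$ be any vertex with $x_i=0$ for all odd $i$ and $x_i\neq0$ for all even $i$, and let $\mathbf z^{10}=x_1\ldots x_k$ be any vertex with $x_i\ne0$ for all odd $i$ and $x_i=0$ for all even $i$. Then (a) $\partial_k(\mathbf z^{01},\mathbf r)=\partial_k(\mathbf z^{10},P)=k-1$; (b) $\partial_k(\mathbf z^{10},\mathbf r)=\partial_k(\mathbf z^{01},P)=k$.
   Context: Let $n\ge 2$ and $k\ge 1$ be integers. $H_{n,k}$ is the simple undirected graph with vertex set $V_{n,k}=\mathbb{Z}_n^k$ (so $|V_{n,k}|=n^k$), whose vertices are written as strings $x_1x_2\ldots x_k$ with $x_j\in\mathbb{Z}_n=\{0,1,\ldots,n-1\}$. Two distinct vertices are adjacent if and only if they are related by one of the following rules. For $i=0$ the prefix $x_1\ldots x_i$ is empty, and "$0\ldots0$" denotes a string of zeros completing the word to length $k$. (R1) $x_1\ldots x_{k-1}x_k\sim x_1\ldots x_{k-1}y_k$ whenever $y_k\neq x_k$. (R2) For $0\le i\le k-2$: $x_1\ldots x_i0\ldots0\sim x_1\ldots x_ix_{i+1}\ldots x_k$ whenever $x_j\neq 0$ for all $i+1\le j\le k$. (R3) For $1\le i\le k-1$: $x_1\ldots x_{i-1}x_i0\ldots0\sim x_1\ldots x_{i-1}y_i0\ldots0$ whenever $x_i,y_i\neq0$ and $x_i\ne y_i$. In particular, $H_{n,1}$ is the complete graph $K_n$.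 The root of $H_{n,k}$ is $\mathbf r=00\ldots0$; a vertex of $H_{n,k}$ is peripheral if all its coordinates are nonzero, and $P$ denotes the set of peripheral vertices. For a vertex $\mathbf x$ and a vertex set $U$, $\partial(\mathbf x,U)=\min_{\mathbf u\in U}\partial(\mathbf x,\mathbf u)$. *)

theory Defs
  imports Main "HOL-Library.Extended_Nat"
begin

text \<open>Vertices of H_{n,k}: words x_1...x_k over {0..n-1}, represented as lists of
  length k; the paper's coordinate x_i is the list entry at (0-based) index i-1.\<close>

definition hvert :: "nat \<Rightarrow> nat \<Rightarrow> nat list \<Rightarrow> bool" where
  "hvert n k x \<longleftrightarrow> length x = k \<and> set x \<subseteq> {..<n}"

definition rule1 :: "nat \<Rightarrow> nat list \<Rightarrow> nat list \<Rightarrow> bool" where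
  "rule1 k x y \<longleftrightarrow> take (k - 1) x = take (k - 1) y \<and> x ! (k - 1) \<noteq> y ! (k - 1)"

text \<open>Rule R2 (one orientation): for 0 <= i <= k-2,
  x_1..x_i 0..0  ~  x_1..x_i y_{i+1}..y_k  with all y_j (j >= i+1) nonzero.\<close>
definition rule2 :: "nat \<Rightarrow> nat list \<Rightarrow> nat list \<Rightarrow> bool" where
  "rule2 k x y \<longleftrightarrow> (\<exists>i. i + 2 \<le> k \<and> x = take i y @ replicate (k - i) 0
       \<and> (\<forall>j. i \<le> j \<and> j < k \<longrightarrow> y ! j \<noteq> 0))"

definition rule3 :: "nat \<Rightarrow> nat list \<Rightarrow> nat list \<Rightarrow> bool" where
  "rule3 k x y \<longleftrightarrow> (\<exists>i. 1 \<le> i \<and> i + 1 \<le> k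
       \<and> take (i - 1) x = take (i - 1) y
       \<and> x ! (i - 1) \<noteq> 0 \<and> y ! (i - 1) \<noteq> 0 \<and> x ! (i - 1) \<noteq> y ! (i - 1)
       \<and> drop i x = replicate (k - i) 0 \<and> drop i y = replicate (k - i) 0)"

definition hadj :: "nat \<Rightarrow> nat \<Rightarrow> nat list \<Rightarrow> nat list \<Rightarrow> bool" where
  "hadj n k x y \<longleftrightarrow> hvert n k x \<and> hvert n k y \<and> x \<noteq> y \<and>
     (rule1 k x y \<or> rule2 k x y \<or> rule2 k y x \<or> rule3 k x y)"

fun hwalk :: "nat \<Rightarrow> nat \<Rightarrow> nat \<Rightarrow> nat list \<Rightarrow> nat list \<Rightarrow> bool" where
  "hwalk n k 0 x y \<longleftrightarrow> hvert n k x \<and> x = y"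
| "hwalk n k (Suc m) x y \<longleftrightarrow> (\<exists>z. hadj n k x z \<and> hwalk n k m z y)"

definition hdist :: "nat \<Rightarrow> nat \<Rightarrow> nat list \<Rightarrow> nat list \<Rightarrow> enat" where
  "hdist n k x y = (INF m \<in> {m. hwalk n k m x y}. enat m)"

definition hdist_set :: "nat \<Rightarrow> nat \<Rightarrow> nat list \<Rightarrow> nat list set \<Rightarrow> enat" where
  "hdist_set n k x U = (INF u \<in> U. hdist n k x u)"

definition hroot :: "nat \<Rightarrow> nat list" where
  "hroot k = replicate k 0"

definition hperiph :: "nat \<Rightarrow> nat \<Rightarrow> nat list set" where
  "hperiph n k = {x. hvert n k x \<and> (\<forall>i<k. x ! i \<noteq> 0)}"

end

theory Submission
  imports Defs
begin

text \<open>Read a vertex as the word of its zero/nonzero pattern, prefixed by one extra letter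
  \<open>c\<close>, and count the alternations of that word. Every edge of \<open>H\<^sub>n\<^sub>,\<^sub>k\<close> either keeps the
  pattern or replaces a constant suffix of it by another constant suffix, so this potential
  changes by at most one along an edge. With the letter \<open>c\<close> meaning zero the root has
  potential 0, with \<open>c\<close> meaning nonzero every peripheral vertex has potential 0, and a word
  with alternating pattern has potential \<open>k - 1\<close> or \<open>k\<close> depending on its first letter. These
  lower bounds are attained by walks that overwrite ever longer tails of the word by a
  constant, moving leftwards one position per step.\<close>

definition nonzero_mask :: "nat list \<Rightarrow> bool list" where
  "nonzero_mask x = map (\<lambda>v. v \<noteq> 0) x"

fun alternations :: "bool list \<Rightarrow> nat" where
  "alternations (a # b # r) = (if a \<noteq> b then 1 else 0) + alternations (b # r)"
| "alternations _ = 0"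

definition potential :: "bool \<Rightarrow> nat list \<Rightarrow> nat" where
  "potential c x = alternations (c # nonzero_mask x)"

definition zero_alternating :: "nat list \<Rightarrow> bool" where
  "zero_alternating z \<longleftrightarrow> (\<forall>i. Suc i < length z \<longrightarrow> (z ! i = 0) \<noteq> (z ! Suc i = 0))"

lemma alternations_snoc:
  "l \<noteq> [] \<Longrightarrow> alternations (l @ [a]) = alternations l + (if last l \<noteq> a then 1 else 0)"
  by (induction l rule: alternations.induct) auto

lemma alternations_append_replicate:
  assumes "l \<noteq> []"
  shows "alternations (l @ replicate m a) = alternations l + (if 0 < m \<and> last l \<noteq> a then 1 else 0)"
proof (induction m)
  case (Suc m)
  have "alternations (l @ replicate (Suc m) a) = alternations ((l @ replicate m a) @ [a])"
    by (simp add: replicate_append_same)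
  also have "\<dots> = alternations (l @ replicate m a) + (if last (l @ replicate m a) \<noteq> a then 1 else 0)"
    using assms alternations_snoc[of "l @ replicate m a" a] by simp
  finally show ?case
    using Suc.IH assms by (cases m) (auto simp: last_append)
qed simp

lemma alternations_append_replicate_le:
  "l \<noteq> [] \<Longrightarrow> alternations (l @ replicate m a) \<le> alternations (l @ replicate m b) + 1"
  by (simp add: alternations_append_replicate)

lemma alternations_Cons_replicate: "alternations (a # replicate m a) = 0"
  by (induction m) auto

lemma alternations_alternating:
  "(\<forall>i. Suc i < length l \<longrightarrow> l ! i \<noteq> l ! Suc i) \<Longrightarrow> alternations l = length l - 1"
proof (induction l rule: alternations.induct)
  case (1 a b r)
  have "\<forall>i. Suc i < length (b # r) \<longrightarrow> (b # r) ! i \<noteq> (b # r) ! Suc i"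
    using "1.prems" by (metis length_Cons nth_Cons_Suc Suc_less_eq)
  moreover have "a \<noteq> b" using "1.prems"[rule_format, of 0] by simp
  ultimately show ?case using "1.IH" by simp
qed auto

lemma rule2_nonzero_mask:
  assumes "rule2 k u v" "length v = k"
  shows "\<exists>q m. nonzero_mask u = q @ replicate m False \<and> nonzero_mask v = q @ replicate m True"
proof -
  obtain i where i: "u = take i v @ replicate (k - i) 0" "\<forall>j. i \<le> j \<and> j < k \<longrightarrow> v ! j \<noteq> 0"
    using assms(1) unfolding rule2_def by blast
  have "nonzero_mask (drop i v) = replicate (k - i) True"
    by (rule nth_equalityI) (use i(2) assms(2) in \<open>auto simp: nonzero_mask_def\<close>)
  then have "nonzero_mask v = nonzero_mask (take i v) @ replicate (k - i) True"
    unfolding nonzero_mask_def by (metis append_take_drop_id map_append)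
  moreover have "nonzero_mask u = nonzero_mask (take i v) @ replicate (k - i) False"
    using i(1) by (simp add: nonzero_mask_def)
  ultimately show ?thesis by blast
qed

lemma rule3_nonzero_mask:
  assumes "rule3 k x y"
  shows "nonzero_mask x = nonzero_mask y"
proof -
  obtain i where i: "1 \<le> i" "take (i - 1) x = take (i - 1) y" "x ! (i - 1) \<noteq> 0" "y ! (i - 1) \<noteq> 0"
    "drop i x = replicate (k - i) 0" "drop i y = replicate (k - i) 0" "i + 1 \<le> k"
    using assms unfolding rule3_def by blast
  have mask: "nonzero_mask w = nonzero_mask (take (i - 1) w) @ True # replicate (k - i) False"
    if "w ! (i - 1) \<noteq> 0" "drop i w = replicate (k - i) 0" for w
  proof -
    have "length (drop i w) = k - i"
      using that(2) by simp
    then have "i - 1 < length w" using i(1,7) by simp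
    then have "drop (i - 1) w = w ! (i - 1) # drop i w"
      using Cons_nth_drop_Suc[of "i - 1" w] i(1) by simp
    then have "w = take (i - 1) w @ w ! (i - 1) # replicate (k - i) 0"
      using that(2) append_take_drop_id[of "i - 1" w] by simp
    then have "nonzero_mask w = nonzero_mask (take (i - 1) w @ w ! (i - 1) # replicate (k - i) 0)"
      by (rule arg_cong)
    then show ?thesis
      using that(1) by (simp add: nonzero_mask_def)
  qed
  show ?thesis
    using mask[OF i(3,5)] mask[OF i(4,6)] i(2) by (simp only:)
qed

lemma hadj_nonzero_mask:
  assumes "hadj n k x y"
  obtains q m a b where "nonzero_mask x = q @ replicate m a" "nonzero_mask y = q @ replicate m b"
proof -
  have lengths: "length x = k" "length y = k"
    using assms by (auto simp: hadj_def hvert_def)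
  consider "rule1 k x y" | "rule2 k x y" | "rule2 k y x" | "rule3 k x y"
    using assms unfolding hadj_def by blast
  then show thesis
  proof cases
    case 1
    have "butlast (nonzero_mask x) = butlast (nonzero_mask y)"
      using 1 lengths by (simp add: rule1_def nonzero_mask_def map_butlast butlast_conv_take take_map)
    moreover have "nonzero_mask w = butlast (nonzero_mask w) @ replicate 1 (last (nonzero_mask w))"
      if "w \<noteq> []" for w
      using that by (simp add: nonzero_mask_def)
    moreover have "x \<noteq> []" "y \<noteq> []" using 1 lengths by (auto simp: rule1_def)
    ultimately show thesis using that by metis
  next
    case 2 then show thesis using rule2_nonzero_mask[OF 2 lengths(2)] that by blast
  next
    case 3 then show thesis using rule2_nonzero_mask[OF 3 lengths(1)] that by blast
  next
    case 4 then show thesis using rule3_nonzero_mask that[of _ 0] by simp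
  qed
qed

lemma potential_hadj_le:
  assumes "hadj n k x y"
  shows "potential c x \<le> potential c y + 1"
proof -
  obtain q m a b where "nonzero_mask x = q @ replicate m a" "nonzero_mask y = q @ replicate m b"
    using hadj_nonzero_mask[OF assms] .
  then show ?thesis
    using alternations_append_replicate_le[of "c # q" m a b] by (simp add: potential_def)
qed

lemma potential_hwalk_le: "hwalk n k m x y \<Longrightarrow> potential c x \<le> potential c y + m"
proof (induction m arbitrary: x)
  case (Suc m)
  then obtain z where "hadj n k x z" "hwalk n k m z y" by auto
  then show ?case using Suc.IH potential_hadj_le[of n k x z c] by fastforce
qed simp

lemma potential_eq_0: "nonzero_mask x = replicate (length x) c \<Longrightarrow> potential c x = 0"
  by (simp add: potential_def alternations_Cons_replicate)

lemma potential_zero_alternating: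
  assumes "zero_alternating z" "z \<noteq> []"
  shows "potential c z = (if c = (z ! 0 = 0) then 1 else 0) + (length z - 1)"
proof -
  have "alternations (nonzero_mask z) = length (nonzero_mask z) - 1"
    using assms(1) by (intro alternations_alternating) (auto simp: zero_alternating_def nonzero_mask_def)
  then show ?thesis
    using assms(2) by (cases z) (auto simp: potential_def nonzero_mask_def)
qed

lemma hvert_nth_less: "hvert n k z \<Longrightarrow> i < k \<Longrightarrow> z ! i < n"
  unfolding hvert_def using nth_mem by blast

lemma hvert_replicate: "a < n \<Longrightarrow> hvert n k (replicate k a)"
  by (auto simp: hvert_def)

lemma hadj_append_replicate:
  assumes "length u = i" "i < k" "set u \<subseteq> {..<n}" "a < n" "b < n" "(a = 0) \<noteq> (b = 0)"
  shows "hadj n k (u @ replicate (k - i) a) (u @ replicate (k - i) b)"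
proof -
  let ?x = "u @ replicate (k - i) a" and ?y = "u @ replicate (k - i) b"
  have at_i: "?x ! i = a" "?y ! i = b" using assms(1,2) by (auto simp: nth_append)
  have "rule1 k ?x ?y \<or> rule2 k ?x ?y \<or> rule2 k ?y ?x"
  proof (cases "i + 1 = k")
    case True
    then show ?thesis using at_i assms(1,6) by (auto simp: rule1_def)
  next
    case False
    then have "i + 2 \<le> k" using assms(2) by simp
    then show ?thesis
      using assms(1,6) unfolding rule2_def by (cases "a = 0") (auto simp: nth_append intro!: exI[of _ i])
  qed
  moreover have "?x \<noteq> ?y" using at_i assms(6) by auto
  ultimately show ?thesis using assms by (auto simp: hadj_def hvert_def)
qed

lemma take_Suc_append_replicate:
  assumes "j < length z" "j < k"
  shows "take (Suc j) z @ replicate (k - Suc j) (z ! j) = take j z @ replicate (k - j) (z ! j)"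
proof -
  have "k - j = Suc (k - Suc j)" using assms(2) by simp
  then show ?thesis using assms(1) by (simp add: take_Suc_conv_app_nth)
qed

lemma hwalk_take_append_replicate:
  assumes "hvert n k z" "zero_alternating z" "j < k"
  shows "hwalk n k j (take j z @ replicate (k - j) (z ! j)) (replicate k (z ! 0))"
  using assms(3)
proof (induction j)
  case 0
  then show ?case using assms(1) by (simp add: hvert_nth_less hvert_replicate)
next
  case (Suc j)
  have z: "length z = k" "set z \<subseteq> {..<n}" using assms(1) by (auto simp: hvert_def)
  then have "set (take (Suc j) z) \<subseteq> {..<n}" by (auto dest: in_set_takeD)
  moreover have "z ! j < n" "z ! Suc j < n"
    using assms(1) Suc.prems by (auto intro: hvert_nth_less)
  moreover have "(z ! Suc j = 0) \<noteq> (z ! j = 0)"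
    using assms(2) Suc.prems z(1) by (auto simp: zero_alternating_def)
  ultimately have "hadj n k (take (Suc j) z @ replicate (k - Suc j) (z ! Suc j))
      (take (Suc j) z @ replicate (k - Suc j) (z ! j))"
    using Suc.prems z(1) by (intro hadj_append_replicate) auto
  then show ?case
    using Suc take_Suc_append_replicate[of j z k] z(1) by auto
qed

lemma hwalk_zero_alternating_replicate:
  assumes "hvert n k z" "zero_alternating z" "k \<ge> 1"
  shows "hwalk n k (k - 1) z (replicate k (z ! 0))"
proof -
  have "length z = k" using assms(1) by (simp add: hvert_def)
  then have "take (k - 1) z @ replicate (k - (k - 1)) (z ! (k - 1)) = z"
    using take_Suc_conv_app_nth[of "k - 1" z] assms(3) by simp
  then show ?thesis
    using hwalk_take_append_replicate[OF assms(1,2), of "k - 1"] assms(3) by simp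
qed

lemma hwalk_snoc: "hwalk n k m x y \<Longrightarrow> hadj n k y w \<Longrightarrow> hwalk n k (Suc m) x w"
  by (induction m arbitrary: x) (auto simp: hadj_def)

lemma hdist_eqI:
  assumes "hwalk n k d x y" "\<And>m. hwalk n k m x y \<Longrightarrow> d \<le> m"
  shows "hdist n k x y = enat d"
  unfolding hdist_def using assms by (auto intro!: antisym INF_lower INF_greatest)

lemma hdist_set_eqI:
  assumes "u \<in> U" "hwalk n k d x u" "\<And>u m. u \<in> U \<Longrightarrow> hwalk n k m x u \<Longrightarrow> d \<le> m"
  shows "hdist_set n k x U = enat d"
proof -
  have "hdist n k x u = enat d" using assms by (intro hdist_eqI)
  then show ?thesis
    unfolding hdist_set_def using assms(1,3)
    by (intro antisym INF_greatest) (force intro: INF_lower2, auto simp: hdist_def intro!: INF_greatest)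
qed

lemma hdist_root_zero_alternating:
  assumes "hvert n k z" "zero_alternating z" "k \<ge> 1"
  shows "hdist n k z (hroot k) = enat (if z ! 0 = 0 then k - 1 else k)"
proof (rule hdist_eqI)
  have walk: "hwalk n k (k - 1) z (replicate k (z ! 0))"
    using hwalk_zero_alternating_replicate[OF assms] .
  show "hwalk n k (if z ! 0 = 0 then k - 1 else k) z (hroot k)"
  proof (cases "z ! 0 = 0")
    case True
    then show ?thesis using walk by (simp add: hroot_def)
  next
    case False
    have "z ! 0 < n" using assms(1,3) by (simp add: hvert_nth_less)
    then have "hadj n k (replicate k (z ! 0)) (hroot k)"
      using hadj_append_replicate[of "[]" 0 k n "z ! 0" 0] False assms(3) by (simp add: hroot_def)
    then show ?thesis using hwalk_snoc[OF walk] False assms(3) by simp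
  qed
  have "length z = k" "z \<noteq> []" using assms(1,3) by (auto simp: hvert_def)
  then have "potential False z = (if z ! 0 = 0 then k - 1 else k)"
    using potential_zero_alternating[OF assms(2), of False] by auto
  moreover have "potential False (hroot k) = 0"
    by (simp add: hroot_def potential_eq_0 nonzero_mask_def)
  ultimately show "(if z ! 0 = 0 then k - 1 else k) \<le> m" if "hwalk n k m z (hroot k)" for m
    using potential_hwalk_le[OF that, of False] by simp
qed

lemma hdist_periph_zero_alternating:
  assumes "hvert n k z" "zero_alternating z" "k \<ge> 1" "n \<ge> 2"
  shows "hdist_set n k z (hperiph n k) = enat (if z ! 0 = 0 then k else k - 1)"
proof -
  have walk: "hwalk n k (k - 1) z (replicate k (z ! 0))"
    using hwalk_zero_alternating_replicate[OF assms(1-3)] .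
  obtain u where u: "u \<in> hperiph n k" "hwalk n k (if z ! 0 = 0 then k else k - 1) z u"
  proof (cases "z ! 0 = 0")
    case True
    have "hadj n k (replicate k 0) (replicate k 1)"
      using hadj_append_replicate[of "[]" 0 k n 0 1] assms(3,4) by simp
    then show thesis
      using that[of "replicate k 1"] hwalk_snoc[OF walk] True assms(3,4)
      by (simp add: hperiph_def hvert_replicate)
  next
    case False
    have "z ! 0 < n" using assms(1,3) by (simp add: hvert_nth_less)
    then show thesis
      using that[of "replicate k (z ! 0)"] walk False by (simp add: hperiph_def hvert_replicate)
  qed
  have "length z = k" "z \<noteq> []" using assms(1,3) by (auto simp: hvert_def)
  then have "potential True z = (if z ! 0 = 0 then k else k - 1)"
    using potential_zero_alternating[OF assms(2), of True] by auto
  moreover have "potential True v = 0" if "v \<in> hperiph n k" for v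
    using that by (intro potential_eq_0) (auto simp: hperiph_def hvert_def nonzero_mask_def
        intro: nth_equalityI)
  ultimately show ?thesis
    using u potential_hwalk_le[of n k _ z _ True] by (intro hdist_set_eqI) fastforce+
qed

theorem mainTheorem7:
  fixes n k :: nat and z01 z10 :: "nat list"
  assumes "n \<ge> 2" and "k \<ge> 1"
    and "hvert n k z01" and "hvert n k z10"
    and "\<forall>i<k. (even i \<longrightarrow> z01 ! i = 0) \<and> (odd i \<longrightarrow> z01 ! i \<noteq> 0)"
    and "\<forall>i<k. (even i \<longrightarrow> z10 ! i \<noteq> 0) \<and> (odd i \<longrightarrow> z10 ! i = 0)"
  shows "hdist n k z01 (hroot k) = enat (k - 1) \<and> hdist_set n k z10 (hperiph n k) = enat (k - 1)
       \<and> hdist n k z10 (hroot k) = enat k \<and> hdist_set n k z01 (hperiph n k) = enat k"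
proof -
  have "zero_alternating z01" "zero_alternating z10"
    using assms(3-6) unfolding zero_alternating_def hvert_def
    by (metis Suc_lessD even_Suc)+
  moreover have "z01 ! 0 = 0" "z10 ! 0 \<noteq> 0" using assms(2,5,6) by auto
  ultimately show ?thesis
    using assms(1-4) hdist_root_zero_alternating hdist_periph_zero_alternating by simp
qed

end
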